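(* Let $P$ be a weighted answer set program, with total choices $\mathcal{T}$, consistent events $\mathcal{C}$, and the probability functions $P_{\mathcal{T}}$ on total choices and $P_{\mathcal{E}}$ on events defined below. If there is a consistent event $e\in\mathcal{C}\setminus\mathcal{T}$ with $P_{\mathcal{E}}(e)\neq 0$, then there is at least one total choice $t\in\mathcal{T}$ with $P_{\mathcal{T}}(t)\neq P_{\mathcal{E}}(t)$.
   Context: Let $\mathcal{A}$ be a finite set of positive atoms; atoms are $a$ and $\overline a$ (classical negation $\neg a$) for $a\in\mathcal{A}$. A weighted answer set program (WASP) is an answer set program (rules $h_1\vee\dots\vee h_n\leftarrow b_1\wedge\dots\wedge b_m$, $h_i$ atoms, $b_j$ atoms or $\mathrm{not}\,a$) together with a set $\mathcal{W}$ of weighted facts $a:w$, $a\in\mathcal{A}$, $w\in[0,1]$; $\mathcal{A}_{\mathcal{W}}$ is the set of atoms occurring in weighted facts. The derived program replaces each $a:w$ by $a\vee\overline a$; the stable models of the WASP are the (Gelfond–Lifschitz) stable models of the derived program; their set is $\mathcal{M}$. Events are subsets of $\{a,\overline a:a\in\mathcal{A}\}$ (set $\mathcal{E}$); an event is inconsistent if it contains some $x$ and $\overline x$, else consistent (set $\mathcal{C}$). A total choice is a set containing exactly one of $a,\overline a$ for each $a\in\mathcal{A}_{\mathcal{W}}$ (so total choices are events); $\mathcal{T}$ is their set. Its weight is $w_{\mathcal{T}}(t)=\prod_{a:w\in\mathcal{W},\,a\in t} w\cdot\prod_{a:w\in\mathcal{W},\,\overline a\in t}(1-w)$, and $P_{\mathcal{T}}(t)=w_{\mathcal{T}}(t)/\sum_{\tau\in\mathcal{T}}w_{\mathcal{T}}(\tau)$.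 For $t\in\mathcal{T}$, $\mathcal{M}(t)\subseteq\mathcal{M}$ is the set of stable models entailed by $t$ (stable models of the program with each weighted fact replaced by the fact chosen in $t$). Parameters $\theta_{s,t}\in[0,1]$ are given for $s\in\mathcal{M}(t)$ with $\sum_{s\in\mathcal{M}(t)}\theta_{s,t}=1$; set $w_{\mathcal{M}}(s,t)=\theta_{s,t}$ if $s\in\mathcal{M}(t)$ and $0$ otherwise, and $w_{\mathcal{M}}(X,t)=\sum_{s\in X}w_{\mathcal{M}}(s,t)$ for $X\subseteq\mathcal{M}$. The stable core of an event $e$ is $\sigma(e)=\{s\in\mathcal{M}: s\subseteq e\text{ or }e\subseteq s\}$. Events $u\sim v$ iff both are inconsistent or both are consistent with $\sigma(u)=\sigma(v)$; $[e]$ is the class of $e$ and $\#[e]$ its cardinality. Define $w_{\mathcal{R}}([e],t)=0$ if $e$ is inconsistent and $w_{\mathcal{R}}([e],t)=w_{\mathcal{M}}(\sigma(e),t)$ otherwise; $w_{\mathcal{E}}(e,t)=w_{\mathcal{R}}([e],t)/\#[e]$ (and $0$ if $\#[e]=0$); $w_{\mathcal{E}}(e)=\sum_{t\in\mathcal{T}}w_{\mathcal{T}}(t)\,w_{\mathcal{E}}(e,t)$; $Z=\sum_{e\in\mathcal{E}}w_{\mathcal{E}}(e)$; and $P_{\mathcal{E}}(e)=w_{\mathcal{E}}(e)/Z$. *)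

theory Defs
  imports Complex_Main
begin

(* Pos a is the atom a, Neg a is its classical negation (overline a). *)
datatype 'a lit = Pos 'a | Neg 'a

definition consistent :: "'a lit set \<Rightarrow> bool" where
  "consistent e \<longleftrightarrow> \<not> (\<exists>a. Pos a \<in> e \<and> Neg a \<in> e)"

(* rule  h_1 v ... v h_n <- b_1, ..., b_k, not c_1, ..., not c_m *)
record 'a rule =
  head :: "'a lit set"
  pbody :: "'a lit set"
  nbody :: "'a lit set"

definition reduct :: "'a rule set \<Rightarrow> 'a lit set \<Rightarrow> ('a lit set \<times> 'a lit set) set" where
  "reduct P S = {(head r, pbody r) | r. r \<in> P \<and> nbody r \<inter> S = {}}"

(* S is closed under a positive (disjunctive) program, with the GL convention that
   an inconsistent set must be the set of all literals *)
definition closed_under :: "('a lit set \<times> 'a lit set) set \<Rightarrow> 'a lit set \<Rightarrow> bool" where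
  "closed_under R S \<longleftrightarrow>
     (\<forall>(h, b) \<in> R. b \<subseteq> S \<longrightarrow> h \<inter> S \<noteq> {}) \<and> (\<not> consistent S \<longrightarrow> S = UNIV)"

definition stable_model :: "'a rule set \<Rightarrow> 'a lit set \<Rightarrow> bool" where
  "stable_model P S \<longleftrightarrow> closed_under (reduct P S) S \<and>
     (\<forall>S'. S' \<subset> S \<longrightarrow> \<not> closed_under (reduct P S) S')"

(* A WASP is a pair (P, W): P the program, W the weighted facts as a partial map
   a :-> w; A_W = dom W. *)

definition derived_program :: "'a rule set \<Rightarrow> ('a \<Rightarrow> real option) \<Rightarrow> 'a rule set" where
  "derived_program P W = P \<union>
     {\<lparr>head = {Pos a, Neg a}, pbody = {}, nbody = {}\<rparr> | a. a \<in> dom W}"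

definition stable_models :: "'a rule set \<Rightarrow> ('a \<Rightarrow> real option) \<Rightarrow> 'a lit set set" where
  "stable_models P W = {S. stable_model (derived_program P W) S}"

definition total_choices :: "('a \<Rightarrow> real option) \<Rightarrow> 'a lit set set" where
  "total_choices W = {t. (\<forall>a \<in> dom W. (Pos a \<in> t \<and> Neg a \<notin> t) \<or> (Neg a \<in> t \<and> Pos a \<notin> t))
      \<and> (\<forall>a. (Pos a \<in> t \<or> Neg a \<in> t) \<longrightarrow> a \<in> dom W)}"

definition wT :: "('a \<Rightarrow> real option) \<Rightarrow> 'a lit set \<Rightarrow> real" where
  "wT W t = (\<Prod>a \<in> dom W. if Pos a \<in> t then the (W a) else 1 - the (W a))"

definition PT :: "('a \<Rightarrow> real option) \<Rightarrow> 'a lit set \<Rightarrow> real" where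
  "PT W t = wT W t / (\<Sum>\<tau> \<in> total_choices W. wT W \<tau>)"

definition chosen_program :: "'a rule set \<Rightarrow> 'a lit set \<Rightarrow> 'a rule set" where
  "chosen_program P t = P \<union> {\<lparr>head = {l}, pbody = {}, nbody = {}\<rparr> | l. l \<in> t}"

definition models_of :: "'a rule set \<Rightarrow> 'a lit set \<Rightarrow> 'a lit set set" where
  "models_of P t = {S. stable_model (chosen_program P t) S}"

definition wM :: "'a rule set \<Rightarrow> ('a lit set \<Rightarrow> 'a lit set \<Rightarrow> real) \<Rightarrow> 'a lit set \<Rightarrow> 'a lit set \<Rightarrow> real" where
  "wM P \<theta> s t = (if s \<in> models_of P t then \<theta> s t else 0)"

definition stable_core :: "'a rule set \<Rightarrow> ('a \<Rightarrow> real option) \<Rightarrow> 'a lit set \<Rightarrow> 'a lit set set" where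
  "stable_core P W e = {s \<in> stable_models P W. s \<subseteq> e \<or> e \<subseteq> s}"

definition ev_equiv :: "'a rule set \<Rightarrow> ('a \<Rightarrow> real option) \<Rightarrow> 'a lit set \<Rightarrow> 'a lit set \<Rightarrow> bool" where
  "ev_equiv P W u v \<longleftrightarrow> (\<not> consistent u \<and> \<not> consistent v) \<or>
     (consistent u \<and> consistent v \<and> stable_core P W u = stable_core P W v)"

definition ev_class :: "'a rule set \<Rightarrow> ('a \<Rightarrow> real option) \<Rightarrow> 'a lit set \<Rightarrow> 'a lit set set" where
  "ev_class P W e = {u. ev_equiv P W u e}"

definition wR :: "'a rule set \<Rightarrow> ('a \<Rightarrow> real option) \<Rightarrow> ('a lit set \<Rightarrow> 'a lit set \<Rightarrow> real)
    \<Rightarrow> 'a lit set \<Rightarrow> 'a lit set \<Rightarrow> real" where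
  "wR P W \<theta> e t = (if \<not> consistent e then 0 else (\<Sum>s \<in> stable_core P W e. wM P \<theta> s t))"

definition wE_t :: "'a rule set \<Rightarrow> ('a \<Rightarrow> real option) \<Rightarrow> ('a lit set \<Rightarrow> 'a lit set \<Rightarrow> real)
    \<Rightarrow> 'a lit set \<Rightarrow> 'a lit set \<Rightarrow> real" where
  "wE_t P W \<theta> e t = (if card (ev_class P W e) = 0 then 0
                      else wR P W \<theta> e t / real (card (ev_class P W e)))"

definition wE :: "'a rule set \<Rightarrow> ('a \<Rightarrow> real option) \<Rightarrow> ('a lit set \<Rightarrow> 'a lit set \<Rightarrow> real)
    \<Rightarrow> 'a lit set \<Rightarrow> real" where
  "wE P W \<theta> e = (\<Sum>t \<in> total_choices W. wT W t * wE_t P W \<theta> e t)"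

(* Z sums over all events, i.e. all sets of literals (finite when the atom type is finite) *)
definition ZE :: "'a rule set \<Rightarrow> ('a \<Rightarrow> real option) \<Rightarrow> ('a lit set \<Rightarrow> 'a lit set \<Rightarrow> real) \<Rightarrow> real" where
  "ZE P W \<theta> = (\<Sum>e \<in> (UNIV :: 'a lit set set). wE P W \<theta> e)"

definition PE :: "'a rule set \<Rightarrow> ('a \<Rightarrow> real option) \<Rightarrow> ('a lit set \<Rightarrow> 'a lit set \<Rightarrow> real)
    \<Rightarrow> 'a lit set \<Rightarrow> real" where
  "PE P W \<theta> e = wE P W \<theta> e / ZE P W \<theta>"

end

theory Submission
  imports Defs
begin

text \<open>If \<open>P\<^sub>\<T>\<close> and \<open>P\<^sub>\<E>\<close> agreed on all total choices, then \<open>P\<^sub>\<E>\<close>, being nonnegative,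
  would put its whole mass \<open>\<Sum>\<^sub>t P\<^sub>\<T>(t) = 1\<close> on \<open>\<T>\<close> and hence vanish on every other event.
  Only the ranges of the weights and of \<open>\<theta>\<close> matter.\<close>

instance lit :: (finite) finite
proof
  have "x \<in> range Pos \<union> range Neg" for x :: "'a lit"
    by (cases x) auto
  then have "(UNIV :: 'a lit set) = range Pos \<union> range Neg"
    by blast
  then show "finite (UNIV :: 'a lit set)"
    by (metis finite finite_UnI finite_imageI)
qed

lemma sum_nonneg_eq_on_subset_imp_zero:
  fixes f :: "'b \<Rightarrow> 'c::ordered_cancel_comm_monoid_add"
  assumes "finite A" "T \<subseteq> A" "\<And>x. x \<in> A \<Longrightarrow> 0 \<le> f x"
    and "sum f A = sum f T" "x \<in> A - T"
  shows "f x = 0"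
proof -
  have "sum f (A - T) + sum f T = 0 + sum f T"
    using sum.subset_diff[OF assms(2,1), of f] assms(4) by simp
  then have "sum f (A - T) = 0"
    by (simp only: add_right_cancel)
  then show ?thesis
    using assms(1,3,5) sum_nonneg_0[of "A - T" f x] by blast
qed

lemma wT_nonneg:
  assumes "\<forall>w \<in> ran W. 0 \<le> w \<and> w \<le> 1"
  shows "0 \<le> wT W t"
  unfolding wT_def using assms by (force intro: prod_nonneg ranI)

lemma sum_wT_pos:
  fixes W :: "'a::finite \<Rightarrow> real option"
  assumes weights: "\<forall>w \<in> ran W. 0 \<le> w \<and> w \<le> 1"
  shows "0 < (\<Sum>t \<in> total_choices W. wT W t)"
proof -
  \<comment> \<open>choosing the more likely literal of each weighted atom makes every factor at least 1/2\<close>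
  define t0 where "t0 = {Pos a | a. a \<in> dom W \<and> 1/2 \<le> the (W a)}
    \<union> {Neg a | a. a \<in> dom W \<and> the (W a) < 1/2}"
  have t0_choice: "t0 \<in> total_choices W"
    unfolding t0_def total_choices_def by auto
  have "0 < wT W t0"
    unfolding wT_def t0_def by (intro prod_pos) auto
  then show ?thesis
    using t0_choice wT_nonneg[OF weights] by (intro sum_pos2) auto
qed

lemma sum_PT_eq_1:
  fixes W :: "'a::finite \<Rightarrow> real option"
  assumes "\<forall>w \<in> ran W. 0 \<le> w \<and> w \<le> 1"
  shows "(\<Sum>t \<in> total_choices W. PT W t) = 1"
  using sum_wT_pos[OF assms] by (simp add: PT_def flip: sum_divide_distrib)

lemma PE_nonneg:
  assumes weights: "\<forall>w \<in> ran W. 0 \<le> w \<and> w \<le> 1"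
    and theta_range: "\<And>t s. t \<in> total_choices W \<Longrightarrow> s \<in> models_of P t \<Longrightarrow> 0 \<le> \<theta> s t"
  shows "0 \<le> PE P W \<theta> e"
proof -
  have wE_t_nonneg: "0 \<le> wE_t P W \<theta> u t" if "t \<in> total_choices W" for u t
    unfolding wE_t_def wR_def wM_def using theta_range that
    by (auto intro!: sum_nonneg divide_nonneg_nonneg)
  have wE_nonneg: "0 \<le> wE P W \<theta> u" for u
    unfolding wE_def using wE_t_nonneg wT_nonneg[OF weights] by (auto intro!: sum_nonneg)
  then have "0 \<le> ZE P W \<theta>"
    unfolding ZE_def by (auto intro!: sum_nonneg)
  then show ?thesis
    unfolding PE_def using wE_nonneg by simp
qed

lemma sum_PE_eq_1:
  fixes P :: "('a::finite) rule set"
  assumes "ZE P W \<theta> \<noteq> 0"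
  shows "(\<Sum>e \<in> UNIV. PE P W \<theta> e) = 1"
  using assms by (simp add: PE_def ZE_def flip: sum_divide_distrib)

theorem mainTheorem2:
  fixes P :: "('a::finite) rule set"
    and W :: "'a \<Rightarrow> real option"
    and \<theta> :: "'a lit set \<Rightarrow> 'a lit set \<Rightarrow> real"
    and e :: "'a lit set"
  assumes weights: "\<And>a w. W a = Some w \<Longrightarrow> 0 \<le> w \<and> w \<le> 1"
    and theta_range: "\<And>t s. t \<in> total_choices W \<Longrightarrow> s \<in> models_of P t \<Longrightarrow> 0 \<le> \<theta> s t \<and> \<theta> s t \<le> 1"
    and theta_sum: "\<And>t. t \<in> total_choices W \<Longrightarrow> (\<Sum>s \<in> models_of P t. \<theta> s t) = 1"
    and e_cons: "consistent e"
    and e_not_tc: "e \<notin> total_choices W"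
    and e_pos: "PE P W \<theta> e \<noteq> 0"
  shows "\<exists>t \<in> total_choices W. PT W t \<noteq> PE P W \<theta> t"
proof (rule ccontr)
  assume "\<not> ?thesis"
  have unit_weights: "\<forall>w \<in> ran W. 0 \<le> w \<and> w \<le> 1"
    using weights by (auto simp: ran_def)
  have PE_nonneg': "0 \<le> PE P W \<theta> u" for u
    using unit_weights theta_range by (blast intro: PE_nonneg)
  from \<open>\<not> ?thesis\<close> have "(\<Sum>t \<in> total_choices W. PE P W \<theta> t) = 1"
    using sum_PT_eq_1[OF unit_weights] by simp
  moreover have "(\<Sum>u \<in> UNIV. PE P W \<theta> u) = 1"
    using e_pos by (intro sum_PE_eq_1) (auto simp: PE_def)
  ultimately have "PE P W \<theta> e = 0"
    using e_not_tc PE_nonneg'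
    by (intro sum_nonneg_eq_on_subset_imp_zero[where A = UNIV and T = "total_choices W"]) auto
  with e_pos show False ..
qed

end
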